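(* Let $p$ be a prime and $a,b$ integers with $\binom{a}{b}\ne0$. Then $\binom{ap}{bp}/\binom{a}{b}$ is a rational number that is congruent to $\varepsilon$ modulo $p^q$ (i.e. the difference lies in $p^q\mathbb{Z}_{(p)}$), where $q$ is the exponent of the exact power of $p$ dividing $p^3ab(a-b)/12$ (if $ab(a-b)=0$ the ratio equals $\varepsilon=1$ exactly), and where $\varepsilon=1$ unless $p=2$ and $(a,b)\equiv(0,1)\pmod 2$, in which case $\varepsilon=-1$.
   Context: For all integers $n, k$, the binomial coefficient is defined by $\binom{n}{k} = \lim_{z \to 0} \frac{\Gamma(z+n+1)}{\Gamma(z+k+1)\Gamma(z+n-k+1)}$; this is a finite integer for all $n,k\in\mathbb{Z}$, agrees with the usual one for $n\ge0$, and satisfies $\binom{n}{k}=\binom{n}{n-k}$. *)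

theory Defs
  imports "HOL-Analysis.Analysis"
begin

definition ibinom :: "int \<Rightarrow> int \<Rightarrow> real" where
  "ibinom n k = Lim (at (0::real))
     (\<lambda>z. Gamma (z + of_int n + 1) / (Gamma (z + of_int k + 1) * Gamma (z + of_int (n - k) + 1)))"

end

theory Submission
  imports Defs "HOL-Number_Theory.Number_Theory"
begin

(*
  For k >= 0 the Gamma limit defining ibinom n k is the generalised binomial coefficient
  n gchoose k, and it vanishes for n < k < 0.  Together with the symmetry b <-> a - b this reduces
  the ratio, up to the sign (-1)^(x (p - 1)), to T = C((x + y) p, x p) / C(x + y, x) with x, y > 0
  (where a = x + y or a = -y, and b = x).

  Removing the multiples of p from the factorials, T = U_1(x, y), where U_e(x, y) is the product
  of 1 + x p^e / n over the n < y p^e prime to p.  As U_e(p x, p y) = U_(e+1)(x, y) and U_e is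
  symmetric, we may assume that p does not divide y.  Pairing n with N - n, N = y p^e, turns U_e
  into a product of factors 1 + w / (n (N - n)) with w = x (x + y) p^(2 e), so U_e - 1 is w times
  the half sum C of the 1 / (n (N - n)), up to a multiple of w^2.  Modulo p^e, 1 / (n (N - n))
  is -1 / n^2, and since inversion permutes the units modulo p^e, the sum of the 1 / n^2 is y times
  the sum of the squares of those units, whose sixfold is divisible by p^e.  Hence 12 C is
  divisible by p^e, so w C, and with it U_e - 1, is divisible by p^(3 e + v(x (x + y)) - v(12)),
  v the p-adic valuation.  For p = 2 and e = 1 the unpaired middle factor n = y yields the sign.
*)

section \<open>Evaluation of ibinom\<close>

lemma Lim_at_eventually_eq:
  fixes x :: "'a::{perfect_space,t2_space}"
  assumes "eventually (\<lambda>z. f z = g z) (at x)" and "isCont g x"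
  shows "Lim (at x) f = g x"
proof (rule tendsto_Lim)
  show "(f \<longlongrightarrow> g x) (at x)"
    using assms by (simp add: isCont_def tendsto_cong)
qed simp

lemma eventually_not_Ints_at_0: "\<forall>\<^sub>F z in at (0::real). \<forall>m::int. z + of_int m \<notin> \<int>"
proof -
  have "z + of_int m \<notin> \<int>" if "z \<noteq> 0" "\<bar>z\<bar> < 1" for z :: real and m :: int
  proof
    assume "z + of_int m \<in> \<int>"
    then obtain j where "z = of_int (j - m)" by (metis Ints_cases add_diff_cancel_right' of_int_diff)
    with that show False by (cases "j - m = 0") (auto simp del: of_int_diff)
  qed
  thus ?thesis unfolding eventually_at by (intro exI[of _ 1]) (auto simp: dist_real_def)
qed

lemma isCont_pochhammer' [continuous_intros]:
  fixes f :: "'a::t2_space \<Rightarrow> 'b::real_normed_field"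
  shows "isCont f x \<Longrightarrow> isCont (\<lambda>z. pochhammer (f z) n) x"
  by (rule isCont_o2[OF _ isCont_pochhammer])

lemma ibinom_symmetric: "ibinom n k = ibinom n (n - k)"
  unfolding ibinom_def by (simp add: mult.commute)

lemma ibinom_gbinomial:
  assumes "0 \<le> k"
  shows "ibinom n k = of_int n gchoose nat k"
proof -
  define g where "g z = pochhammer (z + of_int (n - k) + 1) (nat k) / Gamma (z + of_int k + 1)" for z :: real
  have "eventually (\<lambda>z. Gamma (z + of_int n + 1) / (Gamma (z + of_int k + 1) * Gamma (z + of_int (n - k) + 1))
      = g z) (at 0)"
    using eventually_not_Ints_at_0
  proof eventually_elim
    case (elim z)
    let ?w = "z + of_int (n - k) + 1"
    have "?w \<notin> \<int>" using spec[OF elim, of "n - k + 1"] by (simp add: add.assoc)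
    hence "?w \<notin> \<int>\<^sub>\<le>\<^sub>0" and "Gamma ?w \<noteq> 0"
      using nonpos_Ints_subset_Ints by (auto simp: Gamma_eq_zero_iff)
    moreover have "?w + of_nat (nat k) = z + of_int n + 1" using assms by simp
    ultimately show ?case by (simp add: g_def pochhammer_Gamma add.assoc mult.commute)
  qed
  moreover have "of_int k + 1 \<notin> (\<int>\<^sub>\<le>\<^sub>0 :: real set)"
    using assms by (auto elim!: nonpos_Ints_cases)
  hence "isCont g 0" unfolding g_def
    by (intro continuous_intros) (auto simp: Gamma_eq_zero_iff)
  ultimately have "ibinom n k = g 0" unfolding ibinom_def by (rule Lim_at_eventually_eq)
  moreover have "Gamma (of_int k + 1 :: real) = fact (nat k)"
    using Gamma_fact[of "nat k"] assms by (simp add: add.commute)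
  ultimately show ?thesis
    using assms by (simp add: g_def gbinomial_pochhammer')
qed

lemma ibinom_eq_0_of_neg:
  assumes "n < k" and "k < 0"
  shows "ibinom n k = 0"
proof -
  define g where "g z = pochhammer (z + of_int k + 1) (nat (- k))
    / (pochhammer (z + of_int n + 1) (nat (- k)) * Gamma (z + 1))" for z :: real
  have "eventually (\<lambda>z. Gamma (z + of_int n + 1) / (Gamma (z + of_int k + 1) * Gamma (z + of_int (n - k) + 1))
      = g z) (at 0)"
    using eventually_not_Ints_at_0
  proof eventually_elim
    case (elim z)
    have nonint: "z + of_int m + 1 \<notin> \<int>" for m using spec[OF elim, of "m + 1"] by (simp add: add.assoc)
    hence Gamma_nz: "Gamma (z + of_int m + 1) \<noteq> 0" and nonpos: "z + of_int m + 1 \<notin> \<int>\<^sub>\<le>\<^sub>0" for m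
      using nonpos_Ints_subset_Ints by (auto simp: Gamma_eq_zero_iff)
    have "pochhammer (z + of_int k + 1) (nat (- k)) = Gamma (z + 1) / Gamma (z + of_int k + 1)"
      using pochhammer_Gamma[OF nonpos[of k]] assms by simp
    moreover have "pochhammer (z + of_int n + 1) (nat (- k)) = Gamma (z + of_int (n - k) + 1) / Gamma (z + of_int n + 1)"
      using pochhammer_Gamma[OF nonpos[of n]] assms by (simp add: algebra_simps)
    ultimately show ?case
      using Gamma_nz[of k] Gamma_nz[of 0] Gamma_nz[of "n - k"] Gamma_nz[of n]
      unfolding g_def by (simp only: of_int_0 add_0_right) (simp add: divide_simps)
  qed
  moreover have "pochhammer (of_int n + 1 :: real) (nat (- k)) \<noteq> 0"
    using assms by (auto simp: pochhammer_eq_0_iff)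
  hence "isCont g 0" unfolding g_def
    by (intro continuous_intros) auto
  ultimately have "ibinom n k = g 0" unfolding ibinom_def by (rule Lim_at_eventually_eq)
  moreover have "pochhammer (of_int k + 1 :: real) (nat (- k)) = 0"
    using assms by (auto simp: pochhammer_eq_0_iff intro!: exI[of _ "nat (- k - 1)"])
  ultimately show ?thesis by (simp add: g_def)
qed

lemma ibinom_of_nat: "ibinom (int n) (int k) = real (n choose k)"
  by (simp add: ibinom_gbinomial binomial_gbinomial)

lemma ibinom_0_right: "ibinom n 0 = 1"
  by (simp add: ibinom_gbinomial)

lemma ibinom_self: "ibinom n n = 1"
  using ibinom_symmetric[of n n] by (simp add: ibinom_0_right)

lemma ibinom_minus_of_nat:
  assumes "0 < y"
  shows "ibinom (- int y) (int x) = (-1) ^ x * (real y / real (x + y)) * real (x + y choose x)"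
proof -
  have "ibinom (- int y) (int x) = (-1) ^ x * real (x + y - 1 choose x)"
    using assms by (simp add: ibinom_gbinomial gbinomial_minus binomial_gbinomial of_nat_diff add.commute)
  moreover have "(x + y) * (x + y - 1 choose x) = y * (x + y choose x)"
    using binomial_absorb_comp[of "x + y" x] by simp
  hence "real (x + y) * real (x + y - 1 choose x) = real y * real (x + y choose x)"
    by (simp only: flip: of_nat_mult)
  ultimately show ?thesis using assms by (simp add: field_simps)
qed

lemma ibinom_eq_0_of_nonneg: "0 \<le> n \<Longrightarrow> k < 0 \<or> n < k \<Longrightarrow> ibinom n k = 0"
  using ibinom_of_nat[of "nat n" "nat k"] ibinom_of_nat[of "nat n" "nat (n - k)"] ibinom_symmetric[of n k]
  by (auto simp: binomial_eq_0_iff)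

section \<open>Units below a multiple of p\<close>

lemma (in comm_monoid_set) reflection_pairs:
  fixes N :: nat
  assumes "finite A" and "\<And>n. n \<in> A \<Longrightarrow> n < N \<and> N - n \<in> A"
  shows "F g A = F (\<lambda>n. g n \<^bold>* g (N - n)) {n \<in> A. 2 * n < N} \<^bold>* F g {n \<in> A. 2 * n = N}"
proof -
  let ?B = "{n \<in> A. 2 * n < N}" and ?M = "{n \<in> A. 2 * n = N}"
  have A: "A = (?B \<union> ?M) \<union> (\<lambda>n. N - n) ` ?B"
  proof (intro equalityI subsetI)
    fix n assume "n \<in> A"
    with assms(2)[of n] show "n \<in> (?B \<union> ?M) \<union> (\<lambda>n. N - n) ` ?B"
      by (cases "2 * n \<le> N") (auto intro!: image_eqI[of n _ "N - n"])
  qed (use assms(2) in auto)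
  have inj: "inj_on (\<lambda>n. N - n) ?B" by (auto simp: inj_on_def)
  have disj: "(?B \<union> ?M) \<inter> (\<lambda>n. N - n) ` ?B = {}" by auto
  have fin: "finite (?B \<union> ?M)" "finite ((\<lambda>n. N - n) ` ?B)" using assms(1) by auto
  have "F g A = F g ((?B \<union> ?M) \<union> (\<lambda>n. N - n) ` ?B)"
    using A by (rule arg_cong)
  also have "\<dots> = F g (?B \<union> ?M) \<^bold>* F g ((\<lambda>n. N - n) ` ?B)"
    by (rule union_disjoint[OF fin disj])
  also have "F g (?B \<union> ?M) = F g ?B \<^bold>* F g ?M"
    by (rule union_disjoint) (use assms in auto)
  also have "F g ((\<lambda>n. N - n) ` ?B) = F (\<lambda>n. g (N - n)) ?B"
    by (simp add: reindex[OF inj])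
  finally show ?thesis by (simp add: distrib ac_simps)
qed

definition units_below :: "nat \<Rightarrow> nat \<Rightarrow> nat set" where
  "units_below p N = {n. 0 < n \<and> n < N \<and> \<not> p dvd n}"

lemma finite_units_below [simp]: "finite (units_below p N)"
  by (rule finite_subset[of _ "{..<N}"]) (auto simp: units_below_def)

lemma units_below_reflect:
  assumes "p dvd N" and "n \<in> units_below p N"
  shows "N - n \<in> units_below p N"
proof -
  have "N - (N - n) = n" using assms(2) by (simp add: units_below_def)
  hence "\<not> p dvd N - n" using assms dvd_diff_nat[OF assms(1), of "N - n"] by (auto simp: units_below_def)
  thus ?thesis using assms(2) by (auto simp: units_below_def)
qed

lemma units_below_add:
  assumes "p dvd M"
  shows "units_below p (M + K) = units_below p M \<union> (\<lambda>n. M + n) ` units_below p K"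
proof (intro equalityI subsetI)
  fix n assume n: "n \<in> units_below p (M + K)"
  show "n \<in> units_below p M \<union> (\<lambda>n. M + n) ` units_below p K"
  proof (cases "n < M")
    case False
    have "\<not> p dvd n - M"
      using n assms False dvd_add[OF assms, of "n - M"] by (auto simp: units_below_def)
    moreover from this have "n - M > 0" by (metis dvd_0_right gr0I)
    ultimately have "n - M \<in> units_below p K"
      using n by (auto simp: units_below_def)
    with False show ?thesis by (auto intro!: image_eqI[of n _ "n - M"])
  qed (use n in \<open>auto simp: units_below_def\<close>)
qed (use assms in \<open>auto simp: units_below_def dvd_add_right_iff\<close>)

lemma sum_units_below_mod:
  assumes "p dvd M"
  shows "(\<Sum>n\<in>units_below p (y * M). g (n mod M)) = of_nat y * (\<Sum>u\<in>units_below p M. g u)"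
proof (induction y)
  case (Suc y)
  have "units_below p (y * M) \<inter> (\<lambda>n. y * M + n) ` units_below p M = {}"
    by (auto simp: units_below_def)
  moreover have "p dvd y * M" using assms by simp
  ultimately have "(\<Sum>n\<in>units_below p (Suc y * M). g (n mod M)) =
      (\<Sum>n\<in>units_below p (y * M). g (n mod M)) + (\<Sum>u\<in>units_below p M. g ((y * M + u) mod M))"
    by (simp add: units_below_add sum.union_disjoint sum.reindex add.commute[of M])
  also have "(\<Sum>u\<in>units_below p M. g ((y * M + u) mod M)) = (\<Sum>u\<in>units_below p M. g u)"
    by (intro sum.cong) (auto simp: units_below_def)
  finally show ?case using Suc by (simp add: algebra_simps)
qed (simp add: units_below_def)

lemma sum_units_below_reciprocal_pairs:
  assumes "p dvd N" and "{n \<in> units_below p N. 2 * n = N} = {}"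
  shows "(\<Sum>n\<in>units_below p N. 1 / (real n * real (N - n)))
    = 2 * (\<Sum>n\<in>{n \<in> units_below p N. 2 * n < N}. 1 / (real n * real (N - n)))"
proof -
  have "\<And>n. n \<in> units_below p N \<Longrightarrow> n < N \<and> N - n \<in> units_below p N"
    using units_below_reflect[OF assms(1)] by (auto simp: units_below_def)
  moreover have "1 / (real n * real (N - n)) + 1 / (real (N - n) * real (N - (N - n)))
      = 2 * (1 / (real n * real (N - n)))" if "n < N" for n
    using that by (simp add: mult.commute)
  ultimately show ?thesis
    using sum.reflection_pairs[of "units_below p N" N "\<lambda>n. 1 / (real n * real (N - n))"] assms(2)
    by (simp add: sum_distrib_left)
qed

lemma ex_bij_betw_inverse_mod:
  fixes M :: nat
  defines "U \<equiv> {u. 0 < u \<and> u < M \<and> coprime u M}"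
  shows "\<exists>\<sigma>. bij_betw \<sigma> U U \<and> (\<forall>u\<in>U. [u * \<sigma> u = 1] (mod M))"
proof -
  define \<sigma> where "\<sigma> u = u ^ (totient M - 1) mod M" for u
  have inverse: "[u * \<sigma> u = 1] (mod M)" if "u \<in> U" for u
  proof -
    have "totient M > 0" using that by (simp add: U_def)
    hence "u * u ^ (totient M - 1) = u ^ totient M" by (cases "totient M") simp_all
    hence "[u * \<sigma> u = u ^ totient M] (mod M)"
      unfolding \<sigma>_def by (metis cong_mod_right cong_mult cong_refl)
    also have "[u ^ totient M = 1] (mod M)"
      using that by (intro euler_theorem) (simp add: U_def)
    finally show ?thesis .
  qed
  have into: "\<sigma> ` U \<subseteq> U"
  proof safe
    fix u assume u: "u \<in> U"
    have "coprime (u * \<sigma> u) M"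
      using cong_imp_coprime[OF cong_sym[OF inverse[OF u]]] by simp
    hence "coprime (\<sigma> u) M" by simp
    moreover have "\<sigma> u \<noteq> 0"
    proof
      assume "\<sigma> u = 0"
      with \<open>coprime (\<sigma> u) M\<close> have "M = 1" by simp
      with u show False by (auto simp: U_def)
    qed
    ultimately show "\<sigma> u \<in> U" using u by (simp add: U_def \<sigma>_def)
  qed
  have "inj_on \<sigma> U"
  proof (rule inj_onI)
    fix u u' assume u: "u \<in> U" "u' \<in> U" and "\<sigma> u = \<sigma> u'"
    have "[u * (u' * \<sigma> u') = u * 1] (mod M)" by (intro cong_mult cong_refl inverse u)
    moreover have "[u' * (u * \<sigma> u) = u' * 1] (mod M)" by (intro cong_mult cong_refl inverse u)
    ultimately have "[u = u'] (mod M)"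
      using \<open>\<sigma> u = \<sigma> u'\<close> by (metis (no_types, lifting) cong_sym cong_trans mult.left_commute mult_1_right)
    thus "u = u'" using u by (auto simp: U_def cong_def)
  qed
  moreover have "finite U" by (rule finite_subset[of _ "{..<M}"]) (auto simp: U_def)
  ultimately have "bij_betw \<sigma> U U"
    using into by (simp add: bij_betw_def endo_inj_surj)
  with inverse show ?thesis by blast
qed

lemma six_sum_squares: "6 * (\<Sum>k<m. int k ^ 2) = int m * (int m - 1) * (2 * int m - 1)"
  by (induction m) (auto simp: algebra_simps power2_eq_square)

lemma dvd_six_sum_units_below_squares:
  assumes "0 < p" and "p dvd N"
  shows "int N dvd 6 * (\<Sum>u\<in>units_below p N. int u ^ 2)"
proof -
  obtain M where N: "N = p * M" using assms(2) ..
  have "{..<N} = units_below p N \<union> (\<lambda>m. p * m) ` {..<M}"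
  proof (intro equalityI subsetI)
    fix n assume "n \<in> {..<N}"
    thus "n \<in> units_below p N \<union> (\<lambda>m. p * m) ` {..<M}"
      using assms(1) by (cases "p dvd n") (auto simp: units_below_def N intro: gr0I)
  qed (use assms(1) in \<open>auto simp: units_below_def N\<close>)
  moreover have "units_below p N \<inter> (\<lambda>m. p * m) ` {..<M} = {}"
    by (auto simp: units_below_def)
  moreover have "inj_on (\<lambda>m. p * m) {..<M}" using assms(1) by (simp add: inj_on_def)
  ultimately have "(\<Sum>n<N. int n ^ 2) = (\<Sum>u\<in>units_below p N. int u ^ 2) + int p ^ 2 * (\<Sum>m<M. int m ^ 2)"
    by (simp add: sum.union_disjoint sum.reindex sum_distrib_left power_mult_distrib)
  hence "6 * (\<Sum>u\<in>units_below p N. int u ^ 2) = 6 * (\<Sum>n<N. int n ^ 2) - int p ^ 2 * (6 * (\<Sum>m<M. int m ^ 2))"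
    by simp
  also have "\<dots> = int N * ((int N - 1) * (2 * int N - 1) - int p * ((int M - 1) * (2 * int M - 1)))"
    unfolding six_sum_squares N of_nat_mult by (simp add: algebra_simps power2_eq_square)
  finally show ?thesis by simp
qed

section \<open>The p-free part of binomial coefficients\<close>

(* The part of C((x + y) p^e, x p^e) prime to p, cf. binomial_unit_part_eq_quotient. *)
definition binomial_unit_part :: "nat \<Rightarrow> nat \<Rightarrow> nat \<Rightarrow> nat \<Rightarrow> real" where
  "binomial_unit_part p e x y = (\<Prod>n\<in>units_below p (y * p ^ e). 1 + real x * real p ^ e / real n)"

lemma prod_units_below_add:
  assumes "p dvd M"
  shows "(\<Prod>n\<in>units_below p (M + K). real n)
    = (\<Prod>n\<in>units_below p M. real n) * (\<Prod>n\<in>units_below p K. real (M + n))"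
proof -
  have "units_below p M \<inter> (\<lambda>n. M + n) ` units_below p K = {}" by (auto simp: units_below_def)
  thus ?thesis by (simp add: units_below_add[OF assms] prod.union_disjoint prod.reindex)
qed

lemma binomial_unit_part_eq_quotient:
  assumes "e \<ge> 1"
  shows "binomial_unit_part p e x y = (\<Prod>n\<in>units_below p ((x + y) * p ^ e). real n)
    / ((\<Prod>n\<in>units_below p (x * p ^ e). real n) * (\<Prod>n\<in>units_below p (y * p ^ e). real n))"
proof -
  have "p dvd x * p ^ e" using assms by (simp add: dvd_power)
  have nz: "(\<Prod>n\<in>units_below p K. real n) \<noteq> 0" for K by (auto simp: units_below_def)
  have "binomial_unit_part p e x y = (\<Prod>n\<in>units_below p (y * p ^ e). real (x * p ^ e + n) / real n)"
    unfolding binomial_unit_part_def by (intro prod.cong) (auto simp: units_below_def field_simps)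
  also have "\<dots> = (\<Prod>n\<in>units_below p (y * p ^ e). real (x * p ^ e + n)) / (\<Prod>n\<in>units_below p (y * p ^ e). real n)"
    by (rule prod_dividef)
  also have "\<dots> = (\<Prod>n\<in>units_below p ((x + y) * p ^ e). real n)
      / ((\<Prod>n\<in>units_below p (x * p ^ e). real n) * (\<Prod>n\<in>units_below p (y * p ^ e). real n))"
    using prod_units_below_add[OF \<open>p dvd x * p ^ e\<close>, of "y * p ^ e"] nz[of "x * p ^ e"]
    by (simp add: algebra_simps)
  finally show ?thesis .
qed

lemma binomial_unit_part_commute: "e \<ge> 1 \<Longrightarrow> binomial_unit_part p e x y = binomial_unit_part p e y x"
  by (simp add: binomial_unit_part_eq_quotient add.commute mult.commute)

lemma binomial_unit_part_mult_p:
  "binomial_unit_part p e (p * x) (p * y) = binomial_unit_part p (Suc e) x y"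
  unfolding binomial_unit_part_def by (simp add: algebra_simps)

lemma fact_mult_eq_prod_units_below:
  assumes "0 < p"
  shows "fact (N * p) = (\<Prod>n\<in>units_below p (N * p). real n) * real p ^ N * fact N"
proof -
  have "{1..N * p} = units_below p (N * p) \<union> (\<lambda>k. p * k) ` {1..N}"
  proof (intro equalityI subsetI)
    fix n assume n: "n \<in> {1..N * p}"
    show "n \<in> units_below p (N * p) \<union> (\<lambda>k. p * k) ` {1..N}"
    proof (cases "p dvd n")
      case True
      then obtain k where "n = p * k" ..
      with n assms show ?thesis by (auto simp: mult.commute)
    next
      case False
      hence "n \<noteq> N * p" by auto
      with n False show ?thesis by (auto simp: units_below_def)
    qed
  qed (use assms in \<open>auto simp: units_below_def mult.commute\<close>)
  moreover have "units_below p (N * p) \<inter> (\<lambda>k. p * k) ` {1..N} = {}" by (auto simp: units_below_def)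
  moreover have "inj_on (\<lambda>k. p * k) {1..N}" using assms by (simp add: inj_on_def)
  ultimately have "fact (N * p) = (\<Prod>n\<in>units_below p (N * p). real n) * (\<Prod>k\<in>{1..N}. real (p * k))"
    unfolding fact_prod by (simp add: prod.union_disjoint prod.reindex)
  also have "(\<Prod>k\<in>{1..N}. real (p * k)) = real p ^ N * fact N"
    by (simp add: prod.distrib fact_prod)
  finally show ?thesis by simp
qed

lemma binomial_ratio_eq_binomial_unit_part:
  assumes "0 < p"
  shows "real ((x + y) * p choose (x * p)) / real (x + y choose x) = binomial_unit_part p 1 x y"
proof -
  let ?P = "\<lambda>K. \<Prod>n\<in>units_below p (K * p). real n"
  have nz: "?P K \<noteq> 0" for K by (auto simp: units_below_def)
  have "real ((x + y) * p choose (x * p)) = fact ((x + y) * p) / (fact (x * p) * fact (y * p))"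
    by (subst binomial_fact) (auto simp: algebra_simps)
  also have "\<dots> = ?P (x + y) / (?P x * ?P y) * (fact (x + y) / (fact x * fact y))"
    unfolding fact_mult_eq_prod_units_below[OF assms] using assms nz
    by (simp add: power_add field_simps)
  also have "\<dots> = binomial_unit_part p 1 x y * real (x + y choose x)"
    by (simp add: binomial_unit_part_eq_quotient binomial_fact)
  finally show ?thesis by simp
qed

section \<open>p-adic estimates\<close>

(* p_integral p r and p_pow_dvd p k r say that r lies in Z_(p) and in p^k Z_(p), respectively. *)
definition p_integral :: "nat \<Rightarrow> real \<Rightarrow> bool" where
  "p_integral p r \<longleftrightarrow> (\<exists>u v :: int. \<not> int p dvd v \<and> r = of_int u / of_int v)"

definition p_pow_dvd :: "nat \<Rightarrow> nat \<Rightarrow> real \<Rightarrow> bool" where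
  "p_pow_dvd p k r \<longleftrightarrow> (\<exists>s. p_integral p s \<and> r = real p ^ k * s)"

context
  fixes p :: nat
  assumes p: "prime p"
begin

lemma p_integral_of_int [simp]: "p_integral p (of_int z)"
  unfolding p_integral_def using p
  by (intro exI[of _ z] exI[of _ 1]) (auto simp: prime_gt_1_nat)

lemma p_integral_of_nat [simp]: "p_integral p (of_nat n)"
  using p_integral_of_int[of "int n"] by simp

lemma p_integral_numeral [simp]: "p_integral p (numeral k)"
  using p_integral_of_nat[of "numeral k"] by simp

lemma p_integral_0 [simp]: "p_integral p 0" and p_integral_1 [simp]: "p_integral p 1"
  using p_integral_of_int[of 0] p_integral_of_int[of 1] by simp_all

lemma p_integral_divide_of_int:
  assumes "p_integral p r" and "\<not> int p dvd d"
  shows "p_integral p (r / of_int d)"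
proof -
  obtain u v where "\<not> int p dvd v" and "r = of_int u / of_int v"
    using assms(1) unfolding p_integral_def by blast
  moreover from this have "\<not> int p dvd v * d"
    using assms(2) p by (simp add: prime_dvd_mult_iff)
  ultimately show ?thesis
    unfolding p_integral_def by (intro exI[of _ u] exI[of _ "v * d"]) simp
qed

lemma p_integral_divide_of_nat:
  "p_integral p r \<Longrightarrow> \<not> p dvd d \<Longrightarrow> p_integral p (r / of_nat d)"
  using p_integral_divide_of_int[of r "int d"] by simp

lemma p_integral_add [intro]:
  assumes "p_integral p r" and "p_integral p s"
  shows "p_integral p (r + s)"
proof -
  obtain u v u' v' where "\<not> int p dvd v" "r = of_int u / of_int v"
    and "\<not> int p dvd v'" "s = of_int u' / of_int v'"
    using assms unfolding p_integral_def by blast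
  moreover from this have "v \<noteq> 0" "v' \<noteq> 0" by auto
  ultimately have "r + s = of_int (u * v' + u' * v) / of_int (v * v')"
    by (simp add: field_simps)
  moreover note \<open>\<not> int p dvd v\<close> \<open>\<not> int p dvd v'\<close>
  ultimately show ?thesis
    unfolding p_integral_def using p by (metis prime_dvd_mult_iff prime_nat_int_transfer)
qed

lemma p_integral_mult [intro]:
  assumes "p_integral p r" and "p_integral p s"
  shows "p_integral p (r * s)"
proof -
  obtain u v u' v' where "\<not> int p dvd v" "r = of_int u / of_int v"
    and "\<not> int p dvd v'" "s = of_int u' / of_int v'"
    using assms unfolding p_integral_def by blast
  moreover from this have "r * s = of_int (u * u') / of_int (v * v')"
    by simp
  ultimately show ?thesis
    unfolding p_integral_def using p by (metis prime_dvd_mult_iff prime_nat_int_transfer)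
qed

lemma p_integral_uminus [intro]: "p_integral p r \<Longrightarrow> p_integral p (- r)"
  using p_integral_mult[OF p_integral_of_int[of "-1"], of r] by simp

lemma p_integral_sum [intro]: "(\<And>i. i \<in> I \<Longrightarrow> p_integral p (f i)) \<Longrightarrow> p_integral p (sum f I)"
  by (induction I rule: infinite_finite_induct) auto

lemma p_pow_dvd_0_iff: "p_pow_dvd p 0 r \<longleftrightarrow> p_integral p r"
  unfolding p_pow_dvd_def by simp

lemma p_pow_dvd_mono:
  assumes "p_pow_dvd p k r" and "j \<le> k"
  shows "p_pow_dvd p j r"
proof -
  obtain s where "p_integral p s" and "r = real p ^ k * s"
    using assms(1) unfolding p_pow_dvd_def by blast
  moreover have "real p ^ k = real p ^ j * of_nat (p ^ (k - j))"
    using assms(2) by (metis le_add_diff_inverse of_nat_power power_add)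
  ultimately show ?thesis
    unfolding p_pow_dvd_def by (metis mult.assoc p_integral_mult p_integral_of_nat)
qed

lemma p_pow_dvd_add [intro]: "p_pow_dvd p k r \<Longrightarrow> p_pow_dvd p k s \<Longrightarrow> p_pow_dvd p k (r + s)"
  unfolding p_pow_dvd_def by (auto simp: distrib_left)

lemma p_pow_dvd_uminus [intro]: "p_pow_dvd p k r \<Longrightarrow> p_pow_dvd p k (- r)"
  unfolding p_pow_dvd_def by (metis mult_minus_right p_integral_uminus)

lemma p_pow_dvd_diff [intro]: "p_pow_dvd p k r \<Longrightarrow> p_pow_dvd p k s \<Longrightarrow> p_pow_dvd p k (r - s)"
  using p_pow_dvd_add[of k r "- s"] by auto

lemma p_pow_dvd_0 [simp]: "p_pow_dvd p k 0"
  unfolding p_pow_dvd_def by (intro exI[of _ 0]) simp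

lemma p_pow_dvd_sum [intro]: "(\<And>i. i \<in> I \<Longrightarrow> p_pow_dvd p k (f i)) \<Longrightarrow> p_pow_dvd p k (sum f I)"
  by (induction I rule: infinite_finite_induct) (simp_all add: p_pow_dvd_add)

lemma p_pow_dvd_mult:
  assumes "p_pow_dvd p k r" and "p_pow_dvd p l s"
  shows "p_pow_dvd p (k + l) (r * s)"
  using assms unfolding p_pow_dvd_def by (auto simp: power_add mult_ac)

lemma p_pow_dvd_mult_p_integral:
  "p_pow_dvd p k r \<Longrightarrow> p_integral p s \<Longrightarrow> p_pow_dvd p k (r * s)"
  using p_pow_dvd_mult[of k r 0 s] by (simp add: p_pow_dvd_0_iff)

lemma p_pow_dvd_p_integral_mult:
  "p_integral p s \<Longrightarrow> p_pow_dvd p k r \<Longrightarrow> p_pow_dvd p k (s * r)"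
  using p_pow_dvd_mult_p_integral[of k r s] by (simp add: mult.commute)

lemma p_pow_dvd_prime_power [simp]: "p_pow_dvd p k (real p ^ k)"
  unfolding p_pow_dvd_def by (intro exI[of _ 1]) simp

lemma p_pow_dvd_of_int:
  assumes "int p ^ k dvd z"
  shows "p_pow_dvd p k (of_int z)"
proof -
  obtain m where "z = int p ^ k * m" using assms ..
  thus ?thesis unfolding p_pow_dvd_def by (intro exI[of _ "of_int m"]) simp
qed

lemma p_pow_dvd_of_nat_multiplicity: "p_pow_dvd p (multiplicity (int p) (int n)) (of_nat n)"
  using p_pow_dvd_of_int[OF multiplicity_dvd[of "int p" "int n"]] by simp

lemma p_pow_dvd_divide_of_nat:
  "p_pow_dvd p k r \<Longrightarrow> \<not> p dvd d \<Longrightarrow> p_pow_dvd p k (r / of_nat d)"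
  using p_pow_dvd_mult_p_integral[of k r "1 / of_nat d"] p_integral_divide_of_nat[of 1 d] by simp

lemma p_pow_dvd_cancel:
  assumes "p_integral p r" and "c \<noteq> 0" and "p_pow_dvd p k (of_int c * r)"
  shows "p_pow_dvd p (k - multiplicity (int p) c) r"
proof (cases "k \<le> multiplicity (int p) c")
  case True
  thus ?thesis using assms(1) by (simp add: p_pow_dvd_0_iff)
next
  case False
  define m where "m = multiplicity (int p) c"
  obtain c' where c: "c = int p ^ m * c'" and "\<not> int p dvd c'"
    using multiplicity_decompose'[OF assms(2), of "int p"] p unfolding m_def
    by (metis not_prime_unit prime_nat_int_transfer)
  obtain s where s: "p_integral p s" and "of_int c * r = real p ^ k * s"
    using assms(3) unfolding p_pow_dvd_def by blast
  moreover have "real p ^ k = real p ^ m * real p ^ (k - m)"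
    using False unfolding m_def by (metis le_add_diff_inverse nat_le_linear power_add)
  ultimately have "real p ^ m * (of_int c' * r) = real p ^ m * (real p ^ (k - m) * s)"
    using c by (simp add: mult_ac)
  hence "r = real p ^ (k - m) * (s / of_int c')"
    using \<open>c \<noteq> 0\<close> c p by (auto simp: prime_gt_0_nat field_simps)
  thus ?thesis
    unfolding p_pow_dvd_def m_def using s \<open>\<not> int p dvd c'\<close>
    by (blast intro: p_integral_divide_of_int)
qed

lemma p_pow_dvd_prod_one_plus:
  assumes "\<And>i. i \<in> I \<Longrightarrow> p_pow_dvd p k (a i)"
  shows "p_pow_dvd p (2 * k) ((\<Prod>i\<in>I. 1 + a i) - 1 - (\<Sum>i\<in>I. a i))"
  using assms
proof (induction I rule: infinite_finite_induct)
  case (insert i I)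
  define R where "R = (\<Prod>i\<in>I. 1 + a i) - 1 - (\<Sum>i\<in>I. a i)"
  have "(\<Prod>i\<in>insert i I. 1 + a i) - 1 - (\<Sum>i\<in>insert i I. a i)
      = R + a i * (\<Sum>i\<in>I. a i) + a i * R"
    using insert.hyps by (simp add: R_def algebra_simps)
  moreover have "p_pow_dvd p (2 * k) R"
    using insert unfolding R_def by simp
  moreover have "p_pow_dvd p (k + k) (a i * (\<Sum>i\<in>I. a i))"
    using insert.prems by (intro p_pow_dvd_mult p_pow_dvd_sum) auto
  moreover have "p_pow_dvd p (k + 2 * k) (a i * R)"
    using insert unfolding R_def by (intro p_pow_dvd_mult) auto
  ultimately show ?case
    by (metis mult_2 le_add2 p_pow_dvd_add p_pow_dvd_mono)
qed simp_all

lemma units_below_prime_power: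
  assumes "e \<ge> 1"
  shows "units_below p (p ^ e) = {u. 0 < u \<and> u < p ^ e \<and> coprime u (p ^ e)}"
proof -
  have "coprime u (p ^ e) \<longleftrightarrow> \<not> p dvd u" for u
    using assms p by (simp add: coprime_power_right_iff coprime_commute[of u])
      (meson coprime_common_divisor dvd_refl not_prime_unit prime_imp_coprime)
  thus ?thesis by (auto simp: units_below_def)
qed

lemma p_pow_dvd_inverse_square_diff:
  assumes "[n * m = 1] (mod p ^ e)" and "\<not> p dvd n"
  shows "p_pow_dvd p e (1 / real n ^ 2 - real m ^ 2)"
proof -
  have "[int n * int m = 1] (mod int p ^ e)"
    using assms(1) by (metis cong_int_iff of_nat_1 of_nat_mult of_nat_power)
  hence "int p ^ e dvd (int n * int m - 1) * (- int n * int m - 1)"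
    by (simp add: cong_iff_dvd_diff)
  also have "(int n * int m - 1) * (- int n * int m - 1) = 1 - (int n * int m) ^ 2"
    by (simp add: algebra_simps power2_eq_square)
  finally have "p_pow_dvd p e (of_int (1 - (int n * int m) ^ 2) / real (n * n))"
    using assms(2) p by (intro p_pow_dvd_divide_of_nat p_pow_dvd_of_int) (auto simp: prime_dvd_mult_iff)
  moreover have "n \<noteq> 0" using assms(2) by (metis dvd_0_right)
  hence "1 / real n ^ 2 - real m ^ 2 = of_int (1 - (int n * int m) ^ 2) / real (n * n)"
    by (simp add: field_simps power2_eq_square)
  ultimately show ?thesis by (simp only:)
qed

lemma p_pow_dvd_reciprocal_pair_plus_square:
  assumes "e \<ge> 1" and "n \<in> units_below p (y * p ^ e)"
  shows "p_pow_dvd p e (1 / (real n * real (y * p ^ e - n)) + 1 / real n ^ 2)"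
proof -
  define N where "N = y * p ^ e"
  have "p dvd N" using assms(1) by (simp add: N_def dvd_power)
  have n: "n \<in> units_below p N" using assms(2) by (simp add: N_def)
  have "\<not> p dvd n * n * (N - n)"
    using n units_below_reflect[OF \<open>p dvd N\<close> n] p by (auto simp: units_below_def prime_dvd_mult_iff)
  hence "p_pow_dvd p e (real p ^ e * (real y / real (n * n * (N - n))))"
    by (intro p_pow_dvd_mult_p_integral p_pow_dvd_prime_power p_integral_divide_of_nat p_integral_of_nat)
  moreover have "real (N - n) = real N - real n" "real n \<noteq> 0" "real N - real n \<noteq> 0"
    using n by (auto simp: units_below_def)
  hence "1 / (real n * real (N - n)) + 1 / real n ^ 2 = real p ^ e * (real y / real (n * n * (N - n)))"
    by (simp add: N_def field_simps power2_eq_square)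
  ultimately show ?thesis by (simp add: N_def)
qed

lemma p_pow_dvd_six_sum_reciprocal_pairs:
  fixes y :: nat
  assumes "e \<ge> 1"
  defines "N \<equiv> y * p ^ e"
  shows "p_pow_dvd p e (6 * (\<Sum>n\<in>units_below p N. 1 / (real n * real (N - n))))"
proof -
  have "p dvd p ^ e" using assms(1) by (simp add: dvd_power)
  obtain \<sigma> where \<sigma>: "bij_betw \<sigma> (units_below p (p ^ e)) (units_below p (p ^ e))"
    and inverse: "\<And>u. u \<in> units_below p (p ^ e) \<Longrightarrow> [u * \<sigma> u = 1] (mod p ^ e)"
    using ex_bij_betw_inverse_mod[of "p ^ e"] units_below_prime_power[OF assms(1)] by auto
  define \<tau> where "\<tau> n = \<sigma> (n mod p ^ e)" for n
  \<comment> \<open>Modulo p^e we have 1 / (n (N - n)) = - 1 / n^2 = - \<tau> n ^ 2, and \<tau> runs y times through the units.\<close>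
  have inverse_square: "p_pow_dvd p e (1 / real n ^ 2 - real (\<tau> n) ^ 2)" if "n \<in> units_below p N" for n
  proof -
    have "\<not> p ^ e dvd n" using that \<open>p dvd p ^ e\<close> by (auto simp: units_below_def dest: dvd_trans)
    hence "n mod p ^ e \<in> units_below p (p ^ e)"
      using that \<open>p dvd p ^ e\<close> p
      by (auto simp: units_below_def dvd_mod_iff mod_greater_zero_iff_not_dvd prime_gt_0_nat)
    hence "[n * \<tau> n = 1] (mod p ^ e)"
      unfolding \<tau>_def by (metis cong_mod_left cong_mult cong_refl cong_trans inverse)
    moreover have "\<not> p dvd n" using that by (simp add: units_below_def)
    ultimately show ?thesis by (rule p_pow_dvd_inverse_square_diff)
  qed
  have sum_inverse_squares: "p_pow_dvd p e (6 * (\<Sum>n\<in>units_below p N. real (\<tau> n) ^ 2))"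
  proof -
    have "(\<Sum>n\<in>units_below p N. real (\<tau> n) ^ 2) = real y * (\<Sum>u\<in>units_below p (p ^ e). real (\<sigma> u) ^ 2)"
      unfolding \<tau>_def N_def by (rule sum_units_below_mod[OF \<open>p dvd p ^ e\<close>])
    also have "(\<Sum>u\<in>units_below p (p ^ e). real (\<sigma> u) ^ 2) = of_int (\<Sum>u\<in>units_below p (p ^ e). int u ^ 2)"
      using sum.reindex_bij_betw[OF \<sigma>, of "\<lambda>u. real u ^ 2"] by simp
    finally have "6 * (\<Sum>n\<in>units_below p N. real (\<tau> n) ^ 2)
        = of_int (int y * (6 * (\<Sum>u\<in>units_below p (p ^ e). int u ^ 2)))" by simp
    moreover have "int p ^ e dvd int y * (6 * (\<Sum>u\<in>units_below p (p ^ e). int u ^ 2))"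
      using dvd_six_sum_units_below_squares[OF prime_gt_0_nat[OF p] \<open>p dvd p ^ e\<close>] by simp
    ultimately show ?thesis by (simp only: p_pow_dvd_of_int)
  qed
  have "6 * (\<Sum>n\<in>units_below p N. 1 / (real n * real (N - n)))
      = 6 * (\<Sum>n\<in>units_below p N. 1 / (real n * real (N - n)) + 1 / real n ^ 2)
        - 6 * (\<Sum>n\<in>units_below p N. 1 / real n ^ 2 - real (\<tau> n) ^ 2)
        - 6 * (\<Sum>n\<in>units_below p N. real (\<tau> n) ^ 2)"
    by (simp add: sum.distrib sum_subtractf algebra_simps)
  moreover have "p_pow_dvd p e (6 * (\<Sum>n\<in>units_below p N. 1 / (real n * real (N - n)) + 1 / real n ^ 2))"
    unfolding N_def using p_pow_dvd_reciprocal_pair_plus_square[OF assms(1)]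
    by (intro p_pow_dvd_p_integral_mult p_integral_numeral p_pow_dvd_sum)
  moreover have "p_pow_dvd p e (6 * (\<Sum>n\<in>units_below p N. 1 / real n ^ 2 - real (\<tau> n) ^ 2))"
    using inverse_square by (intro p_pow_dvd_p_integral_mult p_integral_numeral p_pow_dvd_sum)
  ultimately show ?thesis
    using sum_inverse_squares by (simp add: p_pow_dvd_diff)
qed

lemma p_integral_reciprocal_pair:
  assumes "p dvd N" and "n \<in> units_below p N"
  shows "p_integral p (1 / (real n * real (N - n)))"
proof -
  have "\<not> p dvd n * (N - n)"
    using assms units_below_reflect[OF assms] p by (auto simp: units_below_def prime_dvd_mult_iff)
  from p_integral_divide_of_nat[OF p_integral_1 this] show ?thesis by (simp only: of_nat_mult)
qed

lemma binomial_unit_part_expansion: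
  fixes x y e :: nat
  assumes "e \<ge> 1"
  defines "N \<equiv> y * p ^ e" and "w \<equiv> real (x * (x + y)) * real p ^ (2 * e)"
  defines "C \<equiv> (\<Sum>n\<in>{n \<in> units_below p N. 2 * n < N}. 1 / (real n * real (N - n)))"
  obtains R where "p_pow_dvd p (2 * (multiplicity (int p) (int (x * (x + y))) + 2 * e)) R"
    and "binomial_unit_part p e x y
      = (1 + w * C + R) * (\<Prod>n\<in>{n \<in> units_below p N. 2 * n = N}. 1 + real x * real p ^ e / real n)"
proof -
  let ?B = "{n \<in> units_below p N. 2 * n < N}"
  let ?f = "\<lambda>n. 1 + real x * real p ^ e / real n"
  let ?c = "\<lambda>n. 1 / (real n * real (N - n))"
  have "p dvd N" using assms(1) by (simp add: N_def dvd_power)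
  have "?f n * ?f (N - n) = 1 + w * ?c n" if "n \<in> ?B" for n
  proof -
    have "real (N - n) = real N - real n" "real n \<noteq> 0" "real N - real n \<noteq> 0"
      using that by (auto simp: units_below_def)
    thus ?thesis by (simp add: N_def w_def field_simps power_mult power2_eq_square)
  qed
  moreover have "\<And>n. n \<in> units_below p N \<Longrightarrow> n < N \<and> N - n \<in> units_below p N"
    using units_below_reflect[OF \<open>p dvd N\<close>] by (auto simp: units_below_def)
  ultimately have U: "binomial_unit_part p e x y = (\<Prod>n\<in>?B. 1 + w * ?c n) * (\<Prod>n\<in>{n \<in> units_below p N. 2 * n = N}. ?f n)"
    unfolding binomial_unit_part_def N_def[symmetric] by (simp add: prod.reflection_pairs[of _ N])
  have w: "p_pow_dvd p (multiplicity (int p) (int (x * (x + y))) + 2 * e) w"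
    unfolding w_def by (intro p_pow_dvd_mult p_pow_dvd_of_nat_multiplicity p_pow_dvd_prime_power)
  have terms: "p_pow_dvd p (multiplicity (int p) (int (x * (x + y))) + 2 * e) (w * ?c n)" if "n \<in> ?B" for n
    using that by (intro p_pow_dvd_mult_p_integral[OF w] p_integral_reciprocal_pair[OF \<open>p dvd N\<close>]) simp
  have "p_pow_dvd p (2 * (multiplicity (int p) (int (x * (x + y))) + 2 * e))
      ((\<Prod>n\<in>?B. 1 + w * ?c n) - 1 - (\<Sum>n\<in>?B. w * ?c n))"
    by (rule p_pow_dvd_prod_one_plus[OF terms])
  hence "p_pow_dvd p (2 * (multiplicity (int p) (int (x * (x + y))) + 2 * e)) ((\<Prod>n\<in>?B. 1 + w * ?c n) - 1 - w * C)"
    by (simp only: C_def sum_distrib_left)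
  with U show ?thesis by (intro that) (auto simp: algebra_simps)
qed

lemma units_below_middle_empty:
  assumes "e \<ge> 1" and "p \<noteq> 2 \<or> e \<ge> 2"
  shows "{n \<in> units_below p (y * p ^ e). 2 * n = y * p ^ e} = {}"
proof (rule ccontr)
  assume "\<not> ?thesis"
  then obtain n where n: "n \<in> units_below p (y * p ^ e)" and "2 * n = y * p ^ e" by auto
  show False
  proof (cases "p = 2")
    case True
    with assms have "p ^ e = 4 * 2 ^ (e - 2)"
      by (metis le_add_diff_inverse2 mult.commute power_add power2_eq_square numeral_Bit0 numeral_times_numeral num_double)
    hence "n = 2 * (y * 2 ^ (e - 2))"
      using \<open>2 * n = y * p ^ e\<close> by simp
    with n True show False by (simp add: units_below_def)
  next
    case False
    have "p dvd 2 * n" using \<open>2 * n = y * p ^ e\<close> assms(1) by (simp add: dvd_power)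
    with n p have "p dvd 2" by (auto simp: units_below_def prime_dvd_mult_iff)
    with False show False using dvd_imp_le[of p 2] prime_ge_2_nat[OF p] by simp
  qed
qed

lemma binomial_unit_part_cong_one:
  assumes "e \<ge> 1" and "p \<noteq> 2 \<or> e \<ge> 2"
  shows "p_pow_dvd p (3 * e + multiplicity (int p) (int (x * (x + y))) - multiplicity (int p) 12)
    (binomial_unit_part p e x y - 1)"
proof -
  define N where "N = y * p ^ e"
  define w where "w = real (x * (x + y)) * real p ^ (2 * e)"
  define C where "C = (\<Sum>n\<in>{n \<in> units_below p N. 2 * n < N}. 1 / (real n * real (N - n)))"
  define v where "v = multiplicity (int p) (int (x * (x + y)))"
  have "p dvd N" using assms(1) by (simp add: N_def dvd_power)
  have middle: "{n \<in> units_below p N. 2 * n = N} = {}"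
    unfolding N_def by (rule units_below_middle_empty[OF assms])
  obtain R where R: "p_pow_dvd p (2 * (v + 2 * e)) R"
    and "binomial_unit_part p e x y = (1 + w * C + R) * (\<Prod>n\<in>{n \<in> units_below p N. 2 * n = N}. 1 + real x * real p ^ e / real n)"
    using binomial_unit_part_expansion[OF assms(1), where x = x and y = y]
    unfolding N_def[symmetric] C_def[symmetric] w_def[symmetric] v_def[symmetric] by blast
  hence U: "binomial_unit_part p e x y - 1 = w * C + R" by (simp add: middle)
  have "(\<Sum>n\<in>units_below p N. 1 / (real n * real (N - n))) = 2 * C"
    unfolding C_def by (rule sum_units_below_reciprocal_pairs[OF \<open>p dvd N\<close> middle])
  hence "p_pow_dvd p e (of_int 12 * C)"
    using p_pow_dvd_six_sum_reciprocal_pairs[OF assms(1), of y] by (simp add: N_def)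
  moreover have "p_integral p C"
    unfolding C_def by (intro p_integral_sum p_integral_reciprocal_pair[OF \<open>p dvd N\<close>]) simp
  ultimately have "p_pow_dvd p (e - multiplicity (int p) 12) C"
    using p_pow_dvd_cancel by simp
  moreover have "p_pow_dvd p (v + 2 * e) w"
    unfolding w_def v_def by (intro p_pow_dvd_mult p_pow_dvd_of_nat_multiplicity p_pow_dvd_prime_power)
  ultimately have "p_pow_dvd p ((v + 2 * e) + (e - multiplicity (int p) 12)) (w * C)"
    by (intro p_pow_dvd_mult)
  hence "p_pow_dvd p (3 * e + v - multiplicity (int p) 12) (w * C)"
    by (rule p_pow_dvd_mono) linarith
  moreover have "p_pow_dvd p (3 * e + v - multiplicity (int p) 12) R"
    using R by (rule p_pow_dvd_mono) (rule order_trans[OF diff_le_self], simp)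
  ultimately show ?thesis
    unfolding U v_def[symmetric] by (rule p_pow_dvd_add)
qed

lemma middle_factor_cong_prime_two:
  assumes "p = 2" and "odd y"
  shows "p_pow_dvd p (1 + multiplicity (int p) (int (x * (x + y))))
    (1 + real x * real p / real y - (if odd x then -1 else 1))"
proof (cases "odd x")
  case True
  hence "multiplicity (int p) (int (x * (x + y))) = multiplicity (int p) (int (x + y))"
    using assms p by (simp add: multiplicity_prime_elem_times_other prime_imp_prime_elem del: of_nat_add)
  moreover have "1 + real x * real p / real y - (if odd x then -1 else 1) = real p ^ 1 * (real (x + y) / real y)"
    using assms True by (auto simp: field_simps odd_pos)
  moreover have "p_pow_dvd p (1 + multiplicity (int p) (int (x + y))) (real p ^ 1 * (real (x + y) / real y))"
    using assms by (intro p_pow_dvd_mult p_pow_dvd_prime_power p_pow_dvd_divide_of_nat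
        p_pow_dvd_of_nat_multiplicity) simp
  ultimately show ?thesis by (simp only:)
next
  case False
  hence "multiplicity (int p) (int (x * (x + y))) = multiplicity (int p) (int x)"
    using assms p
    by (simp add: multiplicity_prime_elem_times_other prime_imp_prime_elem mult.commute[of "int x"] del: of_nat_add)
  moreover have "1 + real x * real p / real y - (if odd x then -1 else 1) = real p ^ 1 * (real x / real y)"
    using False by simp
  moreover have "p_pow_dvd p (1 + multiplicity (int p) (int x)) (real p ^ 1 * (real x / real y))"
    using assms by (intro p_pow_dvd_mult p_pow_dvd_prime_power p_pow_dvd_divide_of_nat
        p_pow_dvd_of_nat_multiplicity) simp
  ultimately show ?thesis by (simp only:)
qed

lemma binomial_unit_part_cong_prime_two:
  assumes "p = 2" and "odd y"
  shows "p_pow_dvd p (1 + multiplicity (int p) (int (x * (x + y))))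
    (binomial_unit_part p 1 x y - (if odd x then -1 else 1))"
proof -
  define N where "N = y * p ^ 1"
  define w where "w = real (x * (x + y)) * real p ^ (2 * 1)"
  define C where "C = (\<Sum>n\<in>{n \<in> units_below p N. 2 * n < N}. 1 / (real n * real (N - n)))"
  define v where "v = multiplicity (int p) (int (x * (x + y)))"
  define m where "m = 1 + real x * real p / real y"
  have "p dvd N" by (simp add: N_def)
  have "{n \<in> units_below p N. 2 * n = N} = {y}"
    using assms by (auto simp: N_def units_below_def odd_pos)
  then obtain R where R: "p_pow_dvd p (2 * (v + 2 * 1)) R" and U: "binomial_unit_part p 1 x y = (1 + w * C + R) * m"
    using binomial_unit_part_expansion[OF order_refl, where x = x and y = y]
    unfolding N_def[symmetric] C_def[symmetric] w_def[symmetric] v_def[symmetric] m_def by auto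
  have "p_integral p C"
    unfolding C_def by (intro p_integral_sum p_integral_reciprocal_pair[OF \<open>p dvd N\<close>]) simp
  moreover have "p_pow_dvd p (v + 2 * 1) w"
    unfolding w_def v_def by (intro p_pow_dvd_mult p_pow_dvd_of_nat_multiplicity p_pow_dvd_prime_power)
  ultimately have "p_pow_dvd p (v + 2) (w * C + R)"
    using p_pow_dvd_mono[OF R] by (intro p_pow_dvd_add p_pow_dvd_mult_p_integral) auto
  moreover have "p_integral p m"
  proof -
    have "\<not> p dvd y" using assms by simp
    moreover have "p_integral p (real x * real p)"
      using p_integral_of_nat[of "x * p"] by simp
    ultimately show ?thesis
      unfolding m_def by (intro p_integral_add p_integral_1 p_integral_divide_of_nat)
  qed
  ultimately have "p_pow_dvd p (1 + v) ((w * C + R) * m)"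
    by (intro p_pow_dvd_mono[OF p_pow_dvd_mult_p_integral]) auto
  moreover have "p_pow_dvd p (1 + v) (m - (if odd x then -1 else 1))"
    unfolding m_def v_def using middle_factor_cong_prime_two[OF assms] by simp
  ultimately have "p_pow_dvd p (1 + v) ((w * C + R) * m + (m - (if odd x then -1 else 1)))"
    by (rule p_pow_dvd_add)
  thus ?thesis unfolding U v_def[symmetric] by (simp add: algebra_simps)
qed

lemma binomial_unit_part_cong_coprime:
  assumes "e \<ge> 1" and "\<not> p dvd y"
  shows "p_pow_dvd p (3 * e + multiplicity (int p) (int (x * y * (x + y))) - multiplicity (int p) 12)
    (binomial_unit_part p e x y - (if p = 2 \<and> e = 1 \<and> odd x \<and> odd y then -1 else 1))"
proof -
  have "multiplicity (int p) (int y * int (x * (x + y))) = multiplicity (int p) (int (x * (x + y)))"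
    using assms(2) p by (simp add: multiplicity_prime_elem_times_other prime_imp_prime_elem)
  hence v: "multiplicity (int p) (int (x * y * (x + y))) = multiplicity (int p) (int (x * (x + y)))"
    by (simp add: mult_ac)
  show ?thesis
  proof (cases "p \<noteq> 2 \<or> e \<ge> 2")
    case True
    hence "(if p = 2 \<and> e = 1 \<and> odd x \<and> odd y then -1 else 1) = (1 :: real)" by auto
    thus ?thesis unfolding v using binomial_unit_part_cong_one[OF assms(1) True] by simp
  next
    case False
    hence "p = 2" "e = 1" "odd y" using assms by auto
    moreover have "multiplicity (int 2) 12 = 2" by (rule multiplicity_eqI) simp_all
    ultimately show ?thesis unfolding v using binomial_unit_part_cong_prime_two[of y x] by simp
  qed
qed

lemma binomial_unit_part_cong:
  assumes "e \<ge> 1" and "0 < x" and "0 < y"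
  shows "p_pow_dvd p (3 * e + multiplicity (int p) (int (x * y * (x + y))) - multiplicity (int p) 12)
    (binomial_unit_part p e x y - (if p = 2 \<and> e = 1 \<and> odd x \<and> odd y then -1 else 1))"
  using assms
proof (induction x arbitrary: e y rule: less_induct)
  case (less x)
  consider "\<not> p dvd y" | "\<not> p dvd x" | "p dvd x" "p dvd y" by blast
  thus ?case
  proof cases
    case 1
    thus ?thesis using binomial_unit_part_cong_coprime[OF less.prems(1)] by blast
  next
    case 2
    have "x * y * (x + y) = y * x * (y + x)" by (simp only: ac_simps)
    moreover have "(p = 2 \<and> e = 1 \<and> odd x \<and> odd y) = (p = 2 \<and> e = 1 \<and> odd y \<and> odd x)" by auto
    ultimately show ?thesis
      using binomial_unit_part_cong_coprime[OF less.prems(1) 2, of y]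
      by (subst binomial_unit_part_commute[OF less.prems(1)]) (simp only:)
  next
    case 3
    then obtain x' y' where x: "x = p * x'" and y: "y = p * y'" by (auto elim!: dvdE)
    with less.prems prime_gt_1_nat[OF p] have "0 < x'" "0 < y'" "x' < x" by auto
    have "int (x * y * (x + y)) = int p ^ 3 * int (x' * y' * (x' + y'))"
      by (simp add: x y algebra_simps power3_eq_cube)
    hence "multiplicity (int p) (int (x * y * (x + y))) = 3 + multiplicity (int p) (int (x' * y' * (x' + y')))"
      using \<open>0 < x'\<close> \<open>0 < y'\<close> p
      by (simp add: prime_elem_multiplicity_mult_distrib prime_imp_prime_elem multiplicity_same_power not_prime_unit
          del: of_nat_add of_nat_mult)
    moreover have "binomial_unit_part p e x y = binomial_unit_part p (Suc e) x' y'"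
      unfolding x y by (rule binomial_unit_part_mult_p)
    moreover have "(if p = 2 \<and> e = 1 \<and> odd x \<and> odd y then -1 else 1) = (1 :: real)"
      using x 3 p by auto
    moreover have "(if p = 2 \<and> Suc e = 1 \<and> odd x' \<and> odd y' then -1 else 1) = (1 :: real)"
      using less.prems(1) by auto
    ultimately show ?thesis
      using less.IH[OF \<open>x' < x\<close> _ \<open>0 < x'\<close> \<open>0 < y'\<close>, of "Suc e"]
      by (simp only: mult_Suc_right add_ac le_add2)
  qed
qed

lemma ibinom_ratio_eq_binomial_unit_part:
  "ibinom (int (x + y) * int p) (int x * int p) / ibinom (int (x + y)) (int x) = binomial_unit_part p 1 x y"
proof -
  have "int (x + y) * int p = int ((x + y) * p)" and "int x * int p = int (x * p)" by simp_all
  thus ?thesis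
    unfolding ibinom_of_nat by (simp only: ibinom_of_nat binomial_ratio_eq_binomial_unit_part[OF prime_gt_0_nat[OF p]])
qed

lemma ibinom_ratio_cong_of_nat:
  assumes "0 < x" and "0 < y"
  shows "p_pow_dvd p (3 + multiplicity (int p) (int (x * y * (x + y))) - multiplicity (int p) 12)
    (ibinom (int (x + y) * int p) (int x * int p) / ibinom (int (x + y)) (int x)
      - (if p = 2 \<and> odd x \<and> odd y then -1 else 1))"
  unfolding ibinom_ratio_eq_binomial_unit_part
  using binomial_unit_part_cong[OF order_refl assms] by (simp only: mult_1_right simp_thms)

lemma ibinom_ratio_minus:
  assumes "0 < x" and "0 < y"
  shows "ibinom (- int y * int p) (int x * int p) / ibinom (- int y) (int x)
    = (-1) ^ (x * (p - 1)) * (ibinom (int (x + y) * int p) (int x * int p) / ibinom (int (x + y)) (int x))"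
proof -
  have "0 < p" using prime_gt_0_nat[OF p] .
  hence "x * p = x + x * (p - 1)" by (cases p) auto
  hence sign: "(-1 :: real) ^ (x * p) = (-1) ^ x * (-1) ^ (x * (p - 1))"
    by (simp add: power_add)
  have "real (y * p) / real (x * p + y * p) = (real y * real p) / (real (x + y) * real p)"
    by (simp add: algebra_simps)
  also have "\<dots> = real y / real (x + y)"
    using \<open>0 < p\<close> by (intro nonzero_mult_divide_mult_cancel_right) simp
  finally have "real (y * p) / real (x * p + y * p) = real y / real (x + y)" .
  hence minus_p: "ibinom (- int y * int p) (int x * int p)
      = (-1) ^ (x * p) * (real y / real (x + y)) * real ((x + y) * p choose (x * p))"
    using ibinom_minus_of_nat[of "y * p" "x * p"] assms \<open>0 < p\<close> by (simp add: algebra_simps)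
  have plus_p: "ibinom (int (x + y) * int p) (int x * int p) / ibinom (int (x + y)) (int x)
      = real ((x + y) * p choose (x * p)) / real (x + y choose x)"
    by (simp only: ibinom_ratio_eq_binomial_unit_part binomial_ratio_eq_binomial_unit_part[OF \<open>0 < p\<close>])
  have cancel: "s * t * c * B / (s * c * b) = t * (B / b)" if "s \<noteq> 0" "c \<noteq> 0" for s t c B b :: real
    using that by (cases "b = 0") (simp_all add: field_simps)
  show ?thesis
    unfolding minus_p ibinom_minus_of_nat[OF assms(2)] sign plus_p using assms by (intro cancel) simp_all
qed

lemma ibinom_ratio_cong_pos:
  assumes "ibinom a b \<noteq> 0" and "0 < b" and "a * b * (a - b) \<noteq> 0"
  shows "p_pow_dvd p (3 + multiplicity (int p) (a * b * (a - b)) - multiplicity (int p) 12)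
    (ibinom (a * int p) (b * int p) / ibinom a b - (if p = 2 \<and> even a \<and> odd b then -1 else 1))"
proof (cases "0 \<le> a")
  case True
  with assms have "b < a" using ibinom_eq_0_of_nonneg[of a b] by fastforce
  define x y where "x = nat b" and "y = nat (a - b)"
  have "0 < x" "0 < y" and ab: "a = int (x + y)" "b = int x"
    using assms(2) \<open>b < a\<close> by (simp_all add: x_def y_def)
  moreover have "a * b * (a - b) = int (x * y * (x + y))" by (simp add: ab algebra_simps)
  moreover have "(p = 2 \<and> even a \<and> odd b) = (p = 2 \<and> odd x \<and> odd y)" by (auto simp: ab)
  ultimately show ?thesis using ibinom_ratio_cong_of_nat[of x y] by (simp only:)
next
  case False
  define x y where "x = nat b" and "y = nat (- a)"
  have "0 < x" "0 < y" and ab: "a = - int y" "b = int x"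
    using assms(2) False by (simp_all add: x_def y_def)
  define \<epsilon> where "\<epsilon> = (if p = 2 \<and> odd x \<and> odd y then -1 else 1 :: real)"
  define T where "T = ibinom (int (x + y) * int p) (int x * int p) / ibinom (int (x + y)) (int x)"
  have "a * b * (a - b) = int (x * y * (x + y))" by (simp add: ab algebra_simps)
  hence cong: "p_pow_dvd p (3 + multiplicity (int p) (a * b * (a - b)) - multiplicity (int p) 12) (T - \<epsilon>)"
    unfolding T_def \<epsilon>_def using ibinom_ratio_cong_of_nat[OF \<open>0 < x\<close> \<open>0 < y\<close>] by (simp only:)
  have ratio: "ibinom (a * int p) (b * int p) / ibinom a b = (-1) ^ (x * (p - 1)) * T"
    unfolding ab T_def by (rule ibinom_ratio_minus[OF \<open>0 < x\<close> \<open>0 < y\<close>])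
  have "(-1) ^ (x * (p - 1)) * T - (if p = 2 \<and> even a \<and> odd b then -1 else 1) = T - \<epsilon>
      \<or> (-1) ^ (x * (p - 1)) * T - (if p = 2 \<and> even a \<and> odd b then -1 else 1) = - (T - \<epsilon>)"
  proof (cases "p = 2")
    case True
    thus ?thesis by (cases "even x") (auto simp: ab \<epsilon>_def)
  next
    case False
    hence "odd p" using prime_odd_nat[OF p] prime_ge_2_nat[OF p] by simp
    thus ?thesis using False by (simp add: \<epsilon>_def)
  qed
  thus ?thesis
    unfolding ratio using cong p_pow_dvd_uminus[OF cong] by (elim disjE) (simp_all only:)
qed

lemma ibinom_ratio_cong:
  assumes "ibinom a b \<noteq> 0" and "a * b * (a - b) \<noteq> 0"
  shows "p_pow_dvd p (3 + multiplicity (int p) (a * b * (a - b)) - multiplicity (int p) 12)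
    (ibinom (a * int p) (b * int p) / ibinom a b - (if p = 2 \<and> even a \<and> odd b then -1 else 1))"
proof (cases "0 < b")
  case True
  show ?thesis using ibinom_ratio_cong_pos[OF assms(1) True assms(2)] .
next
  case False
  with assms(2) have "b < 0" by auto
  hence "b < a" using assms ibinom_eq_0_of_nonneg[of a b] ibinom_eq_0_of_neg[of a b] by force
  have sym: "ibinom a (a - b) = ibinom a b" "ibinom (a * int p) ((a - b) * int p) = ibinom (a * int p) (b * int p)"
    using ibinom_symmetric[of a b] ibinom_symmetric[of "a * int p" "b * int p"] by (simp_all add: algebra_simps)
  have prod: "a * (a - b) * (a - (a - b)) = a * b * (a - b)" by (simp add: algebra_simps)
  have parity: "(p = 2 \<and> even a \<and> odd (a - b)) = (p = 2 \<and> even a \<and> odd b)" by auto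
  have "p_pow_dvd p (3 + multiplicity (int p) (a * (a - b) * (a - (a - b))) - multiplicity (int p) 12)
    (ibinom (a * int p) ((a - b) * int p) / ibinom a (a - b) - (if p = 2 \<and> even a \<and> odd (a - b) then -1 else 1))"
    using assms \<open>b < a\<close> by (intro ibinom_ratio_cong_pos) (simp_all only: sym prod, simp_all)
  thus ?thesis unfolding sym prod parity .
qed

end

lemma ibinom_ratio_degenerate:
  assumes "ibinom a b \<noteq> 0" and "a * b * (a - b) = 0"
  shows "ibinom (a * c) (b * c) / ibinom a b = 1"
proof -
  have "b = 0 \<or> b = a"
  proof (rule ccontr)
    assume "\<not> (b = 0 \<or> b = a)"
    with assms(2) have "a = 0" and "b < 0 \<or> 0 < b" by auto
    with assms(1) ibinom_eq_0_of_nonneg[of 0 b] show False by simp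
  qed
  thus ?thesis by (auto simp: ibinom_0_right ibinom_self)
qed

theorem lemma5p1:
  fixes p :: nat and a b :: int
  assumes "prime p" and "ibinom a b \<noteq> 0"
  defines "r \<equiv> ibinom (a * int p) (b * int p) / ibinom a b"
      and "\<epsilon> \<equiv> (if p = 2 \<and> even a \<and> odd b then -1 else 1 :: real)"
      and "q \<equiv> 3 + multiplicity (int p) (a * b * (a - b)) - multiplicity (int p) (12::int)"
  shows "r \<in> \<rat> \<and>
    (a * b * (a - b) = 0 \<longrightarrow> r = 1) \<and>
    (a * b * (a - b) \<noteq> 0 \<longrightarrow>
       (\<exists>u v :: int. \<not> int p dvd v \<and> r - \<epsilon> = real p ^ q * (of_int u / of_int v)))"
proof -
  have cong: "p_pow_dvd p q (r - \<epsilon>)" if "a * b * (a - b) \<noteq> 0"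
    unfolding r_def \<epsilon>_def q_def using ibinom_ratio_cong[OF assms(1,2) that] .
  have "r \<in> \<rat>" if nondegenerate: "a * b * (a - b) \<noteq> 0"
  proof -
    obtain u v :: int where "r - \<epsilon> = real p ^ q * (of_int u / of_int v)"
      using cong[OF nondegenerate] unfolding p_pow_dvd_def p_integral_def by blast
    hence "r = of_nat (p ^ q) * (of_int u / of_int v) + \<epsilon>" by simp
    thus ?thesis by (simp add: \<epsilon>_def)
  qed
  moreover have "r = 1" if "a * b * (a - b) = 0"
    unfolding r_def using ibinom_ratio_degenerate[OF assms(2) that] .
  ultimately show ?thesis
    using cong unfolding p_pow_dvd_def p_integral_def by (metis Rats_1)
qed

end
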